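(* Let $p\in(1,\infty)$ and let $Y$ be a Banach space whose norm satisfies Rolewicz property $(\beta)$ with power type $p$. Then there exists $\gamma=\gamma(Y)>0$ such that for every non-contractive Lipschitz map $f\colon P^\omega_1\to Y$, $$\|f(r)-f(s)\|\le 3\left(\mathrm{Lip}(f)-\frac{\gamma}{\mathrm{Lip}(f)^{p-1}}\right).$$
   Context: For a Banach space $X$ with closed unit ball $B_X$ and a sequence $(y_n)_{n\ge1}$ in $X$, let $\mathrm{sep}[(y_n)]:=\inf\{\|y_m-y_n\|: m\neq n\}$. The $(\beta)$-modulus of the norm is $$\overline{\beta}_X(t):=1-\sup\Big\{\inf_{n\ge1}\tfrac{\|x+y_n\|}{2}\ :\ x\in B_X,\ (y_n)_{n\ge1}\subset B_X,\ \mathrm{sep}[(y_n)]\ge t\Big\},$$ and the norm satisfies property $(\beta)$ with power type $p$ if there is $c>0$ with $\overline{\beta}_X(t)\ge ct^p$ for all $t\in(0,2]$. The parasol graph $P^\omega_1$ has vertex set $\{r,b,s\}\cup\{t_i:i\ge1\}$ (all distinct) and edges $\{r,b\}$, $\{b,t_i\}$ and $\{t_i,s\}$ for every $i\ge1$; it carries the unweighted shortest-path metric $\rho$ (so $\rho(r,s)=3$). A map $f$ is non-contractive if $\|f(x)-f(y)\|\ge\rho(x,y)$ for all $x,y$; $\mathrm{Lip}(f)$ is its Lipschitz constant. *)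

theory Defs
  imports "HOL-Analysis.Analysis"
begin

definition sep :: "(nat \<Rightarrow> 'a::real_normed_vector) \<Rightarrow> real" where
  "sep y = Inf {norm (y m - y n) | m n. m \<noteq> n}"

text \<open>The supremum is taken over the given set together with 0;
  since every infimum in the set is nonnegative this does not change the supremum
  when the set is nonempty, and it fixes the convention sup of empty set = 0.\<close>
definition beta_bar :: "'a::real_normed_vector itself \<Rightarrow> real \<Rightarrow> real" where
  "beta_bar _ t = 1 - Sup (insert 0
     {(INF n. norm (x + y n) / 2) | (x::'a) y.
        norm x \<le> 1 \<and> (\<forall>n. norm (y n) \<le> 1) \<and> sep y \<ge> t})"

definition beta_power_type :: "'a::real_normed_vector itself \<Rightarrow> real \<Rightarrow> bool" where
  "beta_power_type T p \<longleftrightarrow> (\<exists>c>0. \<forall>t. 0 < t \<and> t \<le> 2 \<longrightarrow> beta_bar T t \<ge> c * t powr p)"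

datatype parasol = R | B | S | T nat

fun parasol_edge :: "parasol \<Rightarrow> parasol \<Rightarrow> bool" where
  "parasol_edge R B = True"
| "parasol_edge B R = True"
| "parasol_edge B (T i) = True"
| "parasol_edge (T i) B = True"
| "parasol_edge (T i) S = True"
| "parasol_edge S (T i) = True"
| "parasol_edge _ _ = False"

definition parasol_walk :: "parasol list \<Rightarrow> parasol \<Rightarrow> parasol \<Rightarrow> bool" where
  "parasol_walk ws x y \<longleftrightarrow> ws \<noteq> [] \<and> hd ws = x \<and> last ws = y \<and>
     (\<forall>i. Suc i < length ws \<longrightarrow> parasol_edge (ws ! i) (ws ! Suc i))"

definition rho :: "parasol \<Rightarrow> parasol \<Rightarrow> real" where
  "rho x y = real (LEAST n. \<exists>ws. parasol_walk ws x y \<and> length ws = Suc n)"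

definition noncontractive :: "(parasol \<Rightarrow> 'a::real_normed_vector) \<Rightarrow> bool" where
  "noncontractive f \<longleftrightarrow> (\<forall>x y. norm (f x - f y) \<ge> rho x y)"

definition parasol_lipschitz :: "(parasol \<Rightarrow> 'a::real_normed_vector) \<Rightarrow> bool" where
  "parasol_lipschitz f \<longleftrightarrow> (\<exists>L. \<forall>x y. norm (f x - f y) \<le> L * rho x y)"

definition Lip :: "(parasol \<Rightarrow> 'a::real_normed_vector) \<Rightarrow> real" where
  "Lip f = Sup {norm (f x - f y) / rho x y | x y. x \<noteq> y}"

end

theory Submission
  imports Defs
begin

text \<open>Rescale by \<open>L = Lip f \<ge> 1\<close>: the vectors \<open>x = (f R - f B) / L\<close> and
  \<open>y\<^sub>n = (f B - f (T n)) / L\<close> lie in the unit ball, and the \<open>y\<^sub>n\<close> are \<open>2/L\<close>-separated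
  because the tips \<open>T n\<close> are pairwise at distance 2 and \<open>f\<close> is non-contractive.
  Since \<open>x + y\<^sub>n = (f R - f (T n)) / L\<close>, the \<open>(\<beta>)\<close>-modulus bounds
  \<open>inf\<^sub>n \<parallel>f R - f (T n)\<parallel> \<le> 2L (1 - \<beta>(2/L))\<close>; adding the edge from \<open>T n\<close> to \<open>S\<close>
  gives \<open>\<parallel>f R - f S\<parallel> \<le> 3L - 2L \<beta>(2/L) \<le> 3L - 2L c (2/L)\<^sup>p\<close>.\<close>

lemma parasol_edge_irrefl: "\<not> parasol_edge x x"
  by (cases x) auto

lemma parasol_walk_pair: "parasol_edge x y \<Longrightarrow> parasol_walk [x, y] x y"
  by (auto simp: parasol_walk_def less_Suc_eq)

lemma parasol_walk_length_ge_2: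
  assumes "parasol_walk ws x y" "x \<noteq> y"
  shows "2 \<le> length ws"
  using assms by (cases ws) (auto simp: parasol_walk_def Suc_le_eq split: if_splits)

lemma parasol_walk_length_ge_3:
  assumes "parasol_walk ws x y" "x \<noteq> y" "\<not> parasol_edge x y"
  shows "3 \<le> length ws"
proof (rule ccontr)
  assume "\<not> 3 \<le> length ws"
  with parasol_walk_length_ge_2[OF assms(1,2)] have "length ws = 2" by linarith
  then obtain a b where "ws = [a, b]" by (auto simp: length_Suc_conv numeral_2_eq_2)
  with assms show False by (auto simp: parasol_walk_def)
qed

lemma rho_le_walk_length:
  "parasol_walk ws x y \<Longrightarrow> length ws = Suc k \<Longrightarrow> rho x y \<le> real k"
  unfolding rho_def by (auto intro!: Least_le)

lemma rho_ge_if_walks_long: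
  assumes "parasol_walk ws x y"
    and "\<And>ws. parasol_walk ws x y \<Longrightarrow> Suc k \<le> length ws"
  shows "real k \<le> rho x y"
proof -
  let ?P = "\<lambda>n. \<exists>ws. parasol_walk ws x y \<and> length ws = Suc n"
  have "?P (length ws - 1)"
    using assms(1) by (cases ws) (auto simp: parasol_walk_def)
  then have "?P (Least ?P)" by (rule LeastI)
  then have "k \<le> Least ?P" using assms(2) by fastforce
  then show ?thesis unfolding rho_def by simp
qed

lemma rho_edge: "parasol_edge x y \<Longrightarrow> rho x y = 1"
  using rho_le_walk_length[OF parasol_walk_pair, of x y 1]
    rho_ge_if_walks_long[OF parasol_walk_pair, of x y 1]
    parasol_walk_length_ge_2 parasol_edge_irrefl
  by fastforce

lemma rho_T_T: "m \<noteq> n \<Longrightarrow> 2 \<le> rho (T m) (T n)"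
  using rho_ge_if_walks_long[of "[T m, B, T n]" "T m" "T n" 2]
    parasol_walk_length_ge_3[of _ "T m" "T n"]
  by (fastforce simp: parasol_walk_def less_Suc_eq nth_Cons split: nat.splits)

lemma norm_le_Lip_mult_rho:
  fixes f :: "parasol \<Rightarrow> 'a::real_normed_vector"
  assumes "parasol_lipschitz f" "x \<noteq> y" "0 < rho x y"
  shows "norm (f x - f y) \<le> Lip f * rho x y"
proof -
  obtain L where L: "\<And>x y. norm (f x - f y) \<le> L * rho x y"
    using assms(1) unfolding parasol_lipschitz_def by blast
  have "bdd_above {norm (f x - f y) / rho x y | x y. x \<noteq> y}"
  proof (rule bdd_aboveI)
    fix z assume "z \<in> {norm (f x - f y) / rho x y | x y. x \<noteq> y}"
    then obtain a b where z: "z = norm (f a - f b) / rho a b" by blast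
    show "z \<le> max L 0"
    proof (cases "0 < rho a b")
      case True
      then have "z \<le> L" using L[of a b] z by (simp add: divide_le_eq mult.commute)
      then show ?thesis by simp
    next
      case False
      then have "z \<le> 0" using z by (simp add: divide_nonneg_nonpos)
      then show ?thesis by simp
    qed
  qed
  then have "norm (f x - f y) / rho x y \<le> Lip f"
    unfolding Lip_def using assms(2) by (intro cSup_upper) auto
  then show ?thesis using assms(3) by (simp add: divide_le_eq)
qed

lemma norm_edge_le_Lip:
  "parasol_lipschitz f \<Longrightarrow> parasol_edge x y \<Longrightarrow> norm (f x - f y) \<le> Lip f"
  using norm_le_Lip_mult_rho[of f x y] rho_edge[of x y] parasol_edge_irrefl by fastforce

lemma one_le_Lip:
  assumes "noncontractive f" "parasol_lipschitz f"
  shows "1 \<le> Lip f"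
  using assms(1) norm_edge_le_Lip[OF assms(2), of R B] rho_edge[of R B]
  unfolding noncontractive_def by (metis order.trans parasol_edge.simps(1))

lemma le_sep:
  assumes "\<And>m n. m \<noteq> n \<Longrightarrow> t \<le> norm (y m - y n)"
  shows "t \<le> sep y"
  unfolding sep_def
proof (rule cInf_greatest)
  show "{norm (y m - y n) | m n. m \<noteq> n} \<noteq> {}"
  proof -
    have "norm (y 0 - y 1) \<in> {norm (y m - y n) | m n. m \<noteq> n}" by force
    then show ?thesis by blast
  qed
qed (use assms in blast)

lemma INF_norm_add_le_beta_bar:
  fixes x :: "'a::real_normed_vector"
  assumes "norm x \<le> 1" "\<And>n. norm (y n) \<le> 1" "t \<le> sep y"
  shows "(INF n. norm (x + y n) / 2) \<le> 1 - beta_bar TYPE('a) t"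
proof -
  define M where "M = {(INF n. norm (x + y n) / 2) | (x::'a) y.
      norm x \<le> 1 \<and> (\<forall>n. norm (y n) \<le> 1) \<and> sep y \<ge> t}"
  have "bdd_above (insert 0 M)"
  proof (rule bdd_aboveI[of _ 1])
    fix z assume "z \<in> insert 0 M"
    then show "z \<le> 1"
    proof
      assume "z \<in> M"
      then obtain x' :: 'a and y' :: "nat \<Rightarrow> 'a" where z: "z = (INF n. norm (x' + y' n) / 2)"
        and "norm x' \<le> 1" "\<forall>n. norm (y' n) \<le> 1" unfolding M_def by blast
      have "z \<le> norm (x' + y' 0) / 2" unfolding z
        by (rule cINF_lower) (auto intro!: bdd_belowI[of _ 0])
      also have "\<dots> \<le> (norm x' + norm (y' 0)) / 2"
        by (simp add: norm_triangle_ineq divide_right_mono)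
      also have "\<dots> \<le> 1" using \<open>norm x' \<le> 1\<close> \<open>\<forall>n. norm (y' n) \<le> 1\<close>[rule_format, of 0] by simp
      finally show ?thesis .
    qed simp
  qed
  moreover have "(INF n. norm (x + y n) / 2) \<in> M"
    unfolding M_def using assms by blast
  ultimately have "(INF n. norm (x + y n) / 2) \<le> Sup (insert 0 M)"
    by (intro cSup_upper) auto
  then show ?thesis unfolding beta_bar_def M_def by simp
qed

lemma norm_R_S_le_beta_bar:
  fixes f :: "parasol \<Rightarrow> 'a::real_normed_vector"
  assumes nc: "noncontractive f" and lip: "parasol_lipschitz f"
  defines "L \<equiv> Lip f"
  shows "norm (f R - f S) \<le> 3 * L - 2 * L * beta_bar TYPE('a) (2 / L)"
proof -
  have "1 \<le> L" unfolding L_def using nc lip by (rule one_le_Lip)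
  then have "0 < L" by simp
  have edge: "norm (f x - f y) \<le> L" if "parasol_edge x y" for x y
    unfolding L_def using lip that by (rule norm_edge_le_Lip)
  define x where "x = (1 / L) *\<^sub>R (f R - f B)"
  define y where "y n = (1 / L) *\<^sub>R (f B - f (T n))" for n
  have "norm x \<le> 1" using edge[of R B] \<open>0 < L\<close> by (simp add: x_def divide_le_eq)
  moreover have "norm (y n) \<le> 1" for n
    using edge[of B "T n"] \<open>0 < L\<close> by (simp add: y_def divide_le_eq)
  moreover have "2 / L \<le> sep y"
  proof (rule le_sep)
    fix m n :: nat assume "m \<noteq> n"
    then have "2 \<le> norm (f (T n) - f (T m))"
      using rho_T_T[of n m] nc unfolding noncontractive_def by (metis order.trans)
    moreover have "y m - y n = (1 / L) *\<^sub>R (f (T n) - f (T m))"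
      by (simp add: y_def algebra_simps)
    ultimately show "2 / L \<le> norm (y m - y n)"
      using \<open>0 < L\<close> by (simp add: divide_right_mono)
  qed
  ultimately have beta: "(INF n. norm (x + y n) / 2) \<le> 1 - beta_bar TYPE('a) (2 / L)"
    by (rule INF_norm_add_le_beta_bar)
  define D where "D = norm (f R - f S)"
  have "(D - L) / (2 * L) \<le> norm (x + y n) / 2" for n
  proof -
    have "f R - f (T n) = L *\<^sub>R (x + y n)"
      using \<open>0 < L\<close> by (simp add: x_def y_def algebra_simps)
    have "D \<le> norm (f R - f (T n)) + norm (f (T n) - f S)"
      unfolding D_def using norm_triangle_ineq[of "f R - f (T n)" "f (T n) - f S"] by simp
    also have "\<dots> \<le> L * norm (x + y n) + L"
      using edge[of "T n" S] \<open>f R - f (T n) = L *\<^sub>R (x + y n)\<close> \<open>0 < L\<close> by simp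
    finally show ?thesis using \<open>0 < L\<close> by (simp add: field_simps)
  qed
  then have "(D - L) / (2 * L) \<le> (INF n. norm (x + y n) / 2)"
    by (rule cINF_greatest[rotated]) simp
  with beta have "(D - L) / (2 * L) \<le> 1 - beta_bar TYPE('a) (2 / L)" by linarith
  then show ?thesis using \<open>0 < L\<close> by (simp add: D_def divide_le_eq field_simps)
qed

theorem lemma3:
  fixes p :: real
  assumes "1 < p"
    and "beta_power_type TYPE('a::banach) p"
  shows "\<exists>\<gamma>>0. \<forall>f :: parasol \<Rightarrow> 'a.
           noncontractive f \<and> parasol_lipschitz f \<longrightarrow>
           norm (f R - f S) \<le> 3 * (Lip f - \<gamma> / Lip f powr (p - 1))"
proof -
  obtain c where "c > 0"
    and c: "\<And>t. 0 < t \<Longrightarrow> t \<le> 2 \<Longrightarrow> c * t powr p \<le> beta_bar TYPE('a) t"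
    using assms(2) unfolding beta_power_type_def by blast
  define \<gamma> where "\<gamma> = c * 2 powr (p + 1) / 3"
  have "norm (f R - f S) \<le> 3 * (Lip f - \<gamma> / Lip f powr (p - 1))"
    if "noncontractive f" "parasol_lipschitz f" for f :: "parasol \<Rightarrow> 'a"
  proof -
    define L where "L = Lip f"
    have "1 \<le> L" unfolding L_def using that by (rule one_le_Lip)
    have "norm (f R - f S) \<le> 3 * L - 2 * L * beta_bar TYPE('a) (2 / L)"
      unfolding L_def using that by (rule norm_R_S_le_beta_bar)
    also have "\<dots> \<le> 3 * L - 2 * L * (c * (2 / L) powr p)"
      using c[of "2 / L"] \<open>1 \<le> L\<close> by (simp add: divide_le_eq)
    also have "2 * L * (c * (2 / L) powr p) = 3 * (\<gamma> / L powr (p - 1))"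
      using \<open>1 \<le> L\<close> by (simp add: \<gamma>_def powr_divide powr_diff powr_add)
    finally show ?thesis unfolding L_def by simp
  qed
  moreover have "\<gamma> > 0" using \<open>c > 0\<close> by (simp add: \<gamma>_def)
  ultimately show ?thesis by blast
qed

end
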